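(* Let $n\ge1$ and, for each $i=1,\dots,n$, let $m_i\ge1$, let $SCR_{i1},\dots,SCR_{im_i}\ge0$ be real numbers and let $P_i=(\rho_{iy,iw})_{y,w=1}^{m_i}$ be a correlation matrix. Let $(\rho_{i,w})_{i,w=1}^n$ be a correlation matrix. Define $$SCR_i=\sqrt{\sum_{x=1}^{m_i}\sum_{y=1}^{m_i} SCR_{ix}SCR_{iy}\rho_{ix,iy}},\qquad BSCR=\sqrt{\sum_{i=1}^n\sum_{w=1}^n SCR_iSCR_w\rho_{i,w}},$$ so that $BSCR$ is a function of all $SCR_{iy}$, and assume $SCR_i>0$ for all $i$ and $BSCR>0$. Set $AR_i=\frac{\sum_{j=1}^n SCR_j\rho_{i,j}}{BSCR}$ and $AR_{iy}=\frac{\sum_{w=1}^{m_i} SCR_{iw}\rho_{iy,iw}}{SCR_i}$, and $SCR_{iy}^{Ai}=SCR_{iy}\cdot AR_{iy}$. Then the Euler allocation of $BSCR$ among all sub-risks, $SCR_{iy}^A:=SCR_{iy}\cdot\frac{\partial BSCR}{\partial SCR_{iy}}$, is uniquely determined and satisfies $$BSCR=\sum_{i=1}^n\sum_{y=1}^{m_i}SCR_{iy}^A=\sum_{i=1}^n\sum_{y=1}^{m_i}SCR_{iy}\cdot AR_{iy}\cdot AR_i=\sum_{i=1}^n\sum_{y=1}^{m_i}SCR_{iy}^{Ai}\cdot AR_i,$$ i.e. $SCR_{iy}^A=SCR_{iy}\cdot\frac{\sum_{w=1}^{m_i}SCR_{iw}\rho_{iy,iw}}{SCR_i}\cdot AR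_i$.
   Context: This is the two-level Solvency II Standard Formula aggregation: sub-risk capital requirements $SCR_{iy}$ are aggregated into risk-module requirements $SCR_i$, which are aggregated into the Basic Solvency Capital Requirement $BSCR$, with regulator-given correlation coefficients. A correlation matrix means a symmetric positive semidefinite real matrix with unit diagonal. The Euler allocation principle: for a function $f$ positively homogeneous of degree one, $f(x)=\sum_k x_k\,\partial f/\partial x_k$, and the $k$-th term is the amount allocated to component $k$. *)

theory Defs
  imports "HOL-Analysis.Analysis"
begin

text \<open>Indices are 0-based: risk modules i < n, sub-risks y < m i.\<close>

definition corr_matrix :: "nat \<Rightarrow> (nat \<Rightarrow> nat \<Rightarrow> real) \<Rightarrow> bool" where
  "corr_matrix k P \<longleftrightarrow>
     (\<forall>a<k. P a a = 1) \<and>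
     (\<forall>a<k. \<forall>b<k. P a b = P b a) \<and>
     (\<forall>v :: nat \<Rightarrow> real. 0 \<le> (\<Sum>a<k. \<Sum>b<k. v a * v b * P a b))"

text \<open>S i y = SCR_{iy}; rs i y w = rho_{iy,iw}; r i w = rho_{i,w}.\<close>

definition SCR_mod :: "(nat \<Rightarrow> nat) \<Rightarrow> (nat \<Rightarrow> nat \<Rightarrow> nat \<Rightarrow> real)
    \<Rightarrow> (nat \<Rightarrow> nat \<Rightarrow> real) \<Rightarrow> nat \<Rightarrow> real" where
  "SCR_mod m rs S i = sqrt (\<Sum>x<m i. \<Sum>y<m i. S i x * S i y * rs i x y)"

definition BSCR :: "nat \<Rightarrow> (nat \<Rightarrow> nat) \<Rightarrow> (nat \<Rightarrow> nat \<Rightarrow> nat \<Rightarrow> real)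
    \<Rightarrow> (nat \<Rightarrow> nat \<Rightarrow> real) \<Rightarrow> (nat \<Rightarrow> nat \<Rightarrow> real) \<Rightarrow> real" where
  "BSCR n m rs r S = sqrt (\<Sum>i<n. \<Sum>w<n. SCR_mod m rs S i * SCR_mod m rs S w * r i w)"

definition AR_mod :: "nat \<Rightarrow> (nat \<Rightarrow> nat) \<Rightarrow> (nat \<Rightarrow> nat \<Rightarrow> nat \<Rightarrow> real)
    \<Rightarrow> (nat \<Rightarrow> nat \<Rightarrow> real) \<Rightarrow> (nat \<Rightarrow> nat \<Rightarrow> real) \<Rightarrow> nat \<Rightarrow> real" where
  "AR_mod n m rs r S i = (\<Sum>j<n. SCR_mod m rs S j * r i j) / BSCR n m rs r S"

definition AR_sub :: "(nat \<Rightarrow> nat) \<Rightarrow> (nat \<Rightarrow> nat \<Rightarrow> nat \<Rightarrow> real)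
    \<Rightarrow> (nat \<Rightarrow> nat \<Rightarrow> real) \<Rightarrow> nat \<Rightarrow> nat \<Rightarrow> real" where
  "AR_sub m rs S i y = (\<Sum>w<m i. S i w * rs i y w) / SCR_mod m rs S i"

definition SCR_Ai :: "(nat \<Rightarrow> nat) \<Rightarrow> (nat \<Rightarrow> nat \<Rightarrow> nat \<Rightarrow> real)
    \<Rightarrow> (nat \<Rightarrow> nat \<Rightarrow> real) \<Rightarrow> nat \<Rightarrow> nat \<Rightarrow> real" where
  "SCR_Ai m rs S i y = S i y * AR_sub m rs S i y"

definition partial_at :: "((nat \<Rightarrow> nat \<Rightarrow> real) \<Rightarrow> real) \<Rightarrow> (nat \<Rightarrow> nat \<Rightarrow> real)
    \<Rightarrow> nat \<Rightarrow> nat \<Rightarrow> real" where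
  "partial_at F S i y = deriv (\<lambda>t. F (S(i := (S i)(y := t)))) (S i y)"

end

theory Submission
  imports Defs
begin

text \<open>Both levels of the aggregation are square roots of quadratic forms
  Q a = sum_x sum_z a_x a_z M_xz with symmetric M.  The partial derivative of sqrt (Q a)
  in a_y is (M a)_y / sqrt (Q a), so by the chain rule through SCR_i the partial derivative
  of BSCR in SCR_iy is AR_iy * AR_i.  Summing a_y (M a)_y / sqrt (Q a) over y gives back
  sqrt (Q a); applied at both levels this is Euler's identity.\<close>

definition quad_form :: "'a set \<Rightarrow> ('a \<Rightarrow> 'a \<Rightarrow> real) \<Rightarrow> ('a \<Rightarrow> real) \<Rightarrow> real" where
  "quad_form A M a = (\<Sum>x\<in>A. \<Sum>z\<in>A. a x * a z * M x z)"

lemma sum_polar_quad_form: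
  "(\<Sum>y\<in>A. a y * (\<Sum>z\<in>A. a z * M y z)) = quad_form A M a"
  by (simp add: quad_form_def sum_distrib_left mult.assoc)

lemma sum_polar_sqrt_quad_form:
  assumes "quad_form A M a > 0"
  shows "(\<Sum>y\<in>A. a y * ((\<Sum>z\<in>A. a z * M y z) / sqrt (quad_form A M a)))
           = sqrt (quad_form A M a)"
proof -
  have "(\<Sum>y\<in>A. a y * ((\<Sum>z\<in>A. a z * M y z) / sqrt (quad_form A M a)))
          = quad_form A M a / sqrt (quad_form A M a)"
    by (simp only: times_divide_eq_right sum_divide_distrib[symmetric] sum_polar_quad_form)
  also have "\<dots> = sqrt (quad_form A M a)"
    using assms by (metis less_eq_real_def real_div_sqrt)
  finally show ?thesis .
qed

lemma DERIV_quad_form_update: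
  fixes a :: "'a \<Rightarrow> real" and M :: "'a \<Rightarrow> 'a \<Rightarrow> real"
  assumes "finite A" "y \<in> A"
    and sym: "\<forall>u\<in>A. \<forall>v\<in>A. M u v = M v u"
    and g: "DERIV g t0 :> g'" and "g t0 = a y"
  shows "DERIV (\<lambda>t. quad_form A M (a(y := g t))) t0 :> 2 * (\<Sum>z\<in>A. a z * M y z) * g'"
proof -
  define d where "d x = (if x = y then g' else 0)" for x
  have coord: "DERIV (\<lambda>t. (a(y := g t)) x) t0 :> d x" for x
    using g by (cases "x = y") (auto simp: d_def)
  have at_t0: "a(y := g t0) = a"
    using \<open>g t0 = a y\<close> by auto
  have "(\<Sum>x\<in>A. \<Sum>z\<in>A. (d x * a z + a x * d z) * M x z)
          = (\<Sum>x\<in>A. \<Sum>z\<in>A. d x * (a z * M x z)) + (\<Sum>x\<in>A. \<Sum>z\<in>A. d z * (a x * M x z))"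
    by (simp add: ring_distribs sum.distrib mult_ac)
  also have "(\<Sum>x\<in>A. \<Sum>z\<in>A. d z * (a x * M x z)) = (\<Sum>z\<in>A. \<Sum>x\<in>A. d z * (a x * M x z))"
    by (rule sum.swap)
  also have "(\<Sum>x\<in>A. \<Sum>z\<in>A. d x * (a z * M x z)) + (\<Sum>z\<in>A. \<Sum>x\<in>A. d z * (a x * M x z))
               = (\<Sum>x\<in>A. d x * (\<Sum>z\<in>A. a z * M x z)) + (\<Sum>z\<in>A. d z * (\<Sum>x\<in>A. a x * M x z))"
    by (simp only: sum_distrib_left)
  also have "\<dots> = g' * (\<Sum>z\<in>A. a z * M y z) + g' * (\<Sum>x\<in>A. a x * M x y)"
    using assms(1,2) by (simp add: d_def if_distrib[of "\<lambda>u. u * _"] sum.delta' cong: if_cong)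
  also have "(\<Sum>x\<in>A. a x * M x y) = (\<Sum>z\<in>A. a z * M y z)"
    using sym \<open>y \<in> A\<close> by (intro sum.cong) auto
  finally have "(\<Sum>x\<in>A. \<Sum>z\<in>A. (d x * a z + a x * d z) * M x z) = 2 * (\<Sum>z\<in>A. a z * M y z) * g'"
    by simp
  moreover have "DERIV (\<lambda>t. quad_form A M (a(y := g t))) t0
                   :> (\<Sum>x\<in>A. \<Sum>z\<in>A. (d x * a z + a x * d z) * M x z)"
    unfolding quad_form_def
  proof (intro DERIV_sum)
    fix x z
    show "DERIV (\<lambda>t. (a(y := g t)) x * (a(y := g t)) z * M x z) t0
            :> (d x * a z + a x * d z) * M x z"
      using DERIV_cmult_right[OF DERIV_mult[OF coord[of x] coord[of z]], where c = "M x z"]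
      by (simp add: at_t0 algebra_simps)
  qed
  ultimately show ?thesis
    by simp
qed

lemma DERIV_sqrt_quad_form_update:
  fixes a :: "'a \<Rightarrow> real" and M :: "'a \<Rightarrow> 'a \<Rightarrow> real"
  assumes "finite A" "y \<in> A"
    and "\<forall>u\<in>A. \<forall>v\<in>A. M u v = M v u"
    and "DERIV g t0 :> g'" and "g t0 = a y"
    and pos: "quad_form A M a > 0"
  shows "DERIV (\<lambda>t. sqrt (quad_form A M (a(y := g t)))) t0
           :> (\<Sum>z\<in>A. a z * M y z) / sqrt (quad_form A M a) * g'"
proof -
  have "a(y := g t0) = a"
    using \<open>g t0 = a y\<close> by auto
  then have "DERIV (\<lambda>t. sqrt (quad_form A M (a(y := g t)))) t0
               :> inverse (sqrt (quad_form A M a)) / 2 * (2 * (\<Sum>z\<in>A. a z * M y z) * g')"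
    using DERIV_chain2[OF DERIV_real_sqrt DERIV_quad_form_update[where g = g and a = a, OF assms(1-5)]]
      pos by simp
  then show ?thesis
    by (simp add: divide_simps)
qed

lemma SCR_mod_eq_sqrt_quad_form:
  "SCR_mod m rs S i = sqrt (quad_form {..<m i} (rs i) (S i))"
  by (simp add: SCR_mod_def quad_form_def)

lemma BSCR_eq_sqrt_quad_form:
  "BSCR n m rs r S = sqrt (quad_form {..<n} r (SCR_mod m rs S))"
  by (simp add: BSCR_def quad_form_def)

lemma SCR_mod_update:
  "SCR_mod m rs (S(i := f)) = (SCR_mod m rs S)(i := sqrt (quad_form {..<m i} (rs i) f))"
  by (auto simp: SCR_mod_eq_sqrt_quad_form)

lemma corr_matrix_sym: "corr_matrix k P \<Longrightarrow> \<forall>u\<in>{..<k}. \<forall>v\<in>{..<k}. P u v = P v u"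
  by (auto simp: corr_matrix_def)

lemma DERIV_BSCR:
  assumes "i < n" "y < m i"
    and "corr_matrix (m i) (rs i)" "corr_matrix n r"
    and "SCR_mod m rs S i > 0" "BSCR n m rs r S > 0"
  shows "((\<lambda>t. BSCR n m rs r (S(i := (S i)(y := t))))
           has_real_derivative (AR_sub m rs S i y * AR_mod n m rs r S i)) (at (S i y))"
proof -
  define G where "G = (\<lambda>t. sqrt (quad_form {..<m i} (rs i) ((S i)(y := t))))"
  have "DERIV G (S i y) :> AR_sub m rs S i y"
    unfolding G_def
    using DERIV_sqrt_quad_form_update[OF _ _ corr_matrix_sym[OF assms(3)] DERIV_ident]
      assms(2,5)
    by (simp add: AR_sub_def SCR_mod_eq_sqrt_quad_form)
  moreover have "G (S i y) = SCR_mod m rs S i"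
    by (simp add: G_def SCR_mod_eq_sqrt_quad_form)
  ultimately have "DERIV (\<lambda>t. sqrt (quad_form {..<n} r ((SCR_mod m rs S)(i := G t)))) (S i y)
                     :> AR_mod n m rs r S i * AR_sub m rs S i y"
    using DERIV_sqrt_quad_form_update[OF _ _ corr_matrix_sym[OF assms(4)], where g = G]
      assms(1,6)
    by (simp add: AR_mod_def BSCR_eq_sqrt_quad_form)
  then show ?thesis
    by (simp add: G_def BSCR_eq_sqrt_quad_form SCR_mod_update mult.commute)
qed

lemma sum_SCR_AR_sub:
  "SCR_mod m rs S i > 0 \<Longrightarrow> (\<Sum>y<m i. S i y * AR_sub m rs S i y) = SCR_mod m rs S i"
  using sum_polar_sqrt_quad_form[of "{..<m i}" "rs i" "S i"]
  by (simp add: AR_sub_def SCR_mod_eq_sqrt_quad_form)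

lemma sum_SCR_AR_mod:
  "BSCR n m rs r S > 0 \<Longrightarrow> (\<Sum>i<n. SCR_mod m rs S i * AR_mod n m rs r S i) = BSCR n m rs r S"
  using sum_polar_sqrt_quad_form[of "{..<n}" r "SCR_mod m rs S"]
  by (simp add: AR_mod_def BSCR_eq_sqrt_quad_form)

theorem theorem3:
  fixes n :: nat and m :: "nat \<Rightarrow> nat"
    and S :: "nat \<Rightarrow> nat \<Rightarrow> real"
    and rs :: "nat \<Rightarrow> nat \<Rightarrow> nat \<Rightarrow> real"
    and r :: "nat \<Rightarrow> nat \<Rightarrow> real"
  assumes "n \<ge> 1"
    and "\<forall>i<n. m i \<ge> 1"
    and "\<forall>i<n. \<forall>y<m i. S i y \<ge> 0"
    and "\<forall>i<n. corr_matrix (m i) (rs i)"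
    and "corr_matrix n r"
    and "\<forall>i<n. SCR_mod m rs S i > 0"
    and "BSCR n m rs r S > 0"
  shows "(\<forall>i<n. \<forall>y<m i.
            ((\<lambda>t. BSCR n m rs r (S(i := (S i)(y := t))))
               has_real_derivative (AR_sub m rs S i y * AR_mod n m rs r S i)) (at (S i y)))
       \<and> BSCR n m rs r S = (\<Sum>i<n. \<Sum>y<m i. S i y * partial_at (BSCR n m rs r) S i y)
       \<and> BSCR n m rs r S = (\<Sum>i<n. \<Sum>y<m i. S i y * AR_sub m rs S i y * AR_mod n m rs r S i)
       \<and> BSCR n m rs r S = (\<Sum>i<n. \<Sum>y<m i. SCR_Ai m rs S i y * AR_mod n m rs r S i)"
proof -
  have deriv: "((\<lambda>t. BSCR n m rs r (S(i := (S i)(y := t))))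
                 has_real_derivative (AR_sub m rs S i y * AR_mod n m rs r S i)) (at (S i y))"
    if "i < n" "y < m i" for i y
    using that assms(4-7) by (intro DERIV_BSCR) auto
  have partial: "partial_at (BSCR n m rs r) S i y = AR_sub m rs S i y * AR_mod n m rs r S i"
    if "i < n" "y < m i" for i y
    unfolding partial_at_def using DERIV_imp_deriv[OF deriv[OF that]] .
  have euler: "BSCR n m rs r S = (\<Sum>i<n. \<Sum>y<m i. S i y * AR_sub m rs S i y * AR_mod n m rs r S i)"
    using sum_SCR_AR_mod[OF assms(7)] sum_SCR_AR_sub assms(6)
    by (simp add: sum_distrib_right[symmetric])
  moreover have "BSCR n m rs r S = (\<Sum>i<n. \<Sum>y<m i. S i y * partial_at (BSCR n m rs r) S i y)"
    unfolding euler by (intro sum.cong refl) (simp add: partial mult.assoc)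
  moreover have "BSCR n m rs r S = (\<Sum>i<n. \<Sum>y<m i. SCR_Ai m rs S i y * AR_mod n m rs r S i)"
    unfolding euler by (simp add: SCR_Ai_def)
  ultimately show ?thesis
    using deriv by blast
qed

end
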